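(* Let $G^\sigma$ be an oriented graph whose underlying graph $G$ is a simple connected graph with $n$ vertices and $m$ edges. Then $$sr(G^\sigma)+\alpha(G)\geqslant 4n-2m-\sqrt{n(n-1)-2m+\tfrac{1}{4}}-\tfrac{5}{2},$$ with equality if and only if $G\cong S_n$ or $G\cong C_3$.
   Context: An oriented graph $G^\sigma$ is obtained from a simple graph $G$ by assigning a direction to each edge. Its skew-adjacency matrix $S(G^\sigma)=[s_{x,y}]$ has $s_{x,y}=1$ if there is an arc from $x$ to $y$, $s_{x,y}=-1$ if there is an arc from $y$ to $x$, and $0$ otherwise; the skew-rank $sr(G^\sigma)$ is the rank of $S(G^\sigma)$. $\alpha(G)$ is the independence number of $G$. $S_n$ denotes the star on $n$ vertices (the single vertex when $n=1$) and $C_3$ the triangle. *)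

theory Defs
  imports "HOL-Analysis.Analysis"
begin

text \<open>An oriented graph on the finite vertex type 'n is given by its arc relation D
  (D x y means an arc from x to y). It is oriented: no pair carries arcs in both
  directions (this also forces irreflexivity, i.e. no loops).\<close>

definition oriented :: "('n \<Rightarrow> 'n \<Rightarrow> bool) \<Rightarrow> bool" where
  "oriented D \<longleftrightarrow> (\<forall>x y. D x y \<longrightarrow> \<not> D y x)"

definition underlying :: "('n \<Rightarrow> 'n \<Rightarrow> bool) \<Rightarrow> 'n \<Rightarrow> 'n \<Rightarrow> bool" where
  "underlying D x y \<longleftrightarrow> D x y \<or> D y x"

definition skew_adj :: "('n::finite \<Rightarrow> 'n \<Rightarrow> bool) \<Rightarrow> real^'n^'n" where
  "skew_adj D = (\<chi> x y. if D x y then 1 else if D y x then -1 else 0)"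

definition skew_rank :: "('n::finite \<Rightarrow> 'n \<Rightarrow> bool) \<Rightarrow> nat" where
  "skew_rank D = rank (skew_adj D)"

text \<open>Graphs on the whole (finite) vertex type, given by symmetric irreflexive E.\<close>
definition connected_graph :: "('n \<Rightarrow> 'n \<Rightarrow> bool) \<Rightarrow> bool" where
  "connected_graph E \<longleftrightarrow> (\<forall>x y. E\<^sup>*\<^sup>* x y)"

definition num_edges :: "('n \<Rightarrow> 'n \<Rightarrow> bool) \<Rightarrow> nat" where
  "num_edges E = card {{x, y} | x y. E x y}"

definition independent_set :: "('n \<Rightarrow> 'n \<Rightarrow> bool) \<Rightarrow> 'n set \<Rightarrow> bool" where
  "independent_set E S \<longleftrightarrow> (\<forall>x\<in>S. \<forall>y\<in>S. \<not> E x y)"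

definition independence_number :: "('n::finite \<Rightarrow> 'n \<Rightarrow> bool) \<Rightarrow> nat" where
  "independence_number E = Max {card S | S. independent_set E S}"

definition graph_iso :: "('n \<Rightarrow> 'n \<Rightarrow> bool) \<Rightarrow> 'b set \<Rightarrow> ('b \<Rightarrow> 'b \<Rightarrow> bool) \<Rightarrow> bool" where
  "graph_iso E V' E' \<longleftrightarrow> (\<exists>f. bij_betw f UNIV V' \<and> (\<forall>x y. E x y \<longleftrightarrow> E' (f x) (f y)))"

text \<open>Star S_k on vertex set {0..<k} with centre 0 (single vertex when k = 1).\<close>
definition star_graph :: "nat \<Rightarrow> nat \<Rightarrow> bool" where
  "star_graph i j \<longleftrightarrow> i \<noteq> j \<and> (i = 0 \<or> j = 0)"

text \<open>Triangle C_3 on vertex set {0..<3}.\<close>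
definition triangle_graph :: "nat \<Rightarrow> nat \<Rightarrow> bool" where
  "triangle_graph i j \<longleftrightarrow> i \<noteq> j"

end

(* Writing c for the number of components, every oriented graph satisfies
   sr + 2 alpha + 2m + 2c >= 4n. This is proved for all induced subgraphs at once by induction,
   deleting the end v of a longest path: v is isolated, or pendant (then delete its neighbour
   too, which lowers the skew rank by 2), or all its neighbours lie on the path, so that v
   has at least two neighbours but no component disappears.
   For connected G this gives sr + alpha >= 4n - 2m - 2 - alpha. Counting non-adjacent pairs
   gives alpha (alpha - 1) <= n (n - 1) - 2m, i.e. alpha <= 1/2 + sqrt (n (n - 1) - 2m + 1/4),
   and the bound follows. Equality forces both estimates to be tight: G is a complete split
   graph over a maximum independent set, and the first equation leaves only the star and
   the triangle. *)

theory Submission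
  imports Defs "HOL-Combinatorics.Transposition"
begin

section \<open>Skew rank of induced subgraphs\<close>

lemma skew_adj_entry:
  "skew_adj D $ i $ j = (if D i j then 1 else if D j i then -1 else 0)"
  by (simp add: skew_adj_def)

lemma skew_adj_nonzero_iff:
  "oriented D \<Longrightarrow> skew_adj D $ i $ j \<noteq> 0 \<longleftrightarrow> underlying D i j"
  by (auto simp: skew_adj_entry underlying_def oriented_def)

lemma transpose_skew_adj:
  "oriented D \<Longrightarrow> transpose (skew_adj D) = (\<chi> i. (-1) *s skew_adj D $ i)"
  by (auto simp: vec_eq_iff transpose_def skew_adj_entry oriented_def)

lemma skew_rank_less_card_if_odd:
  fixes D :: "'n::finite \<Rightarrow> 'n \<Rightarrow> bool"
  assumes "oriented D" and "odd CARD('n)"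
  shows "skew_rank D < CARD('n)"
proof -
  have "det (skew_adj D) = det (transpose (skew_adj D))"
    by simp
  also have "\<dots> = (-1) ^ CARD('n) * det (skew_adj D)"
    unfolding transpose_skew_adj[OF assms(1)] det_rows_mul by simp
  also have "\<dots> = - det (skew_adj D)"
    using assms(2) by simp
  finally have "det (skew_adj D) = 0"
    by simp
  then show ?thesis
    by (simp add: skew_rank_def det_eq_0_rank)
qed

text \<open>The skew rank of the subgraph induced by S is the rank of the principal submatrix on S,
  computed from its rows padded with zeros outside S.\<close>

definition induced_row :: "('n::finite \<Rightarrow> 'n \<Rightarrow> bool) \<Rightarrow> 'n set \<Rightarrow> 'n \<Rightarrow> real^'n" where
  "induced_row D S i = (\<chi> j. if j \<in> S then skew_adj D $ i $ j else 0)"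

definition induced_skew_rank :: "('n::finite \<Rightarrow> 'n \<Rightarrow> bool) \<Rightarrow> 'n set \<Rightarrow> nat" where
  "induced_skew_rank D S = dim (induced_row D S ` S)"

lemma induced_skew_rank_UNIV: "induced_skew_rank D UNIV = skew_rank D"
proof -
  have "induced_row D UNIV ` UNIV = rows (skew_adj D)"
    by (auto simp: induced_row_def rows_def row_def vec_eq_iff)
  then show ?thesis
    by (simp add: induced_skew_rank_def skew_rank_def row_rank_def)
qed

definition restrict_vec :: "'n set \<Rightarrow> real^'n \<Rightarrow> real^'n" where
  "restrict_vec S x = (\<chi> j. if j \<in> S then x $ j else 0)"

lemma linear_restrict_vec: "linear (restrict_vec S)"
  by (rule linearI) (auto simp: restrict_vec_def vec_eq_iff)

lemma induced_skew_rank_mono: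
  assumes "S \<subseteq> T"
  shows "induced_skew_rank D S \<le> induced_skew_rank D T"
proof -
  have "induced_row D S ` S = restrict_vec S ` induced_row D T ` S"
    using assms by (auto simp: induced_row_def restrict_vec_def vec_eq_iff image_image intro!: image_cong)
  also have "dim \<dots> \<le> dim (induced_row D T ` S)"
    by (rule dim_image_le[OF linear_restrict_vec])
  also have "\<dots> \<le> dim (induced_row D T ` T)"
    using assms by (intro dim_subset) auto
  finally show ?thesis
    by (simp add: induced_skew_rank_def)
qed

lemma span_component_eq_0:
  fixes A :: "(real^'n::finite) set"
  assumes "\<forall>x\<in>A. x $ u = 0" and "y \<in> span A"
  shows "y $ u = 0"
proof -
  have "subspace {x::real^'n. x $ u = 0}"
    by (auto simp: subspace_def)
  then have "span A \<subseteq> {x. x $ u = 0}"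
    using assms(1) by (intro span_minimal) auto
  then show ?thesis
    using assms(2) by auto
qed

text \<open>Deleting a pendant vertex v and its neighbour u lowers the rank by 2: the row of v is
  a multiple of the unit vector at u, which clears column u from the other rows, and the
  row of u is the only one left with a nonzero entry in column v.\<close>

lemma induced_skew_rank_remove_pendant:
  fixes D :: "'n::finite \<Rightarrow> 'n \<Rightarrow> bool"
  assumes ori: "oriented D" and S: "u \<in> S" "v \<in> S" and uv: "underlying D v u"
    and pendant: "\<forall>y\<in>S. underlying D v y \<longrightarrow> y = u"
  shows "induced_skew_rank D (S - {u, v}) + 2 \<le> induced_skew_rank D S"
proof -
  define M where "M = skew_adj D"
  define T where "T = S - {u, v}"
  define e where "e = (axis u 1 :: real^'n)"
  define R where "R = induced_row D S ` S"
  have "u \<noteq> v"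
    using uv ori by (auto simp: underlying_def oriented_def)
  have Mvu: "M $ v $ u \<noteq> 0"
    using skew_adj_nonzero_iff[OF ori] uv by (simp add: M_def)
  have M0: "M $ i $ j = 0" if "\<not> underlying D i j" for i j
    using skew_adj_nonzero_iff[OF ori, of i j] that by (simp add: M_def)
  have row_v: "induced_row D S v = (M $ v $ u) *\<^sub>R e"
    using S pendant M0 by (auto simp: vec_eq_iff induced_row_def e_def M_def axis_def)
  have row_T: "induced_row D T i = induced_row D S i - (M $ i $ u / M $ v $ u) *\<^sub>R induced_row D S v"
    if "i \<in> T" for i
  proof -
    have "M $ i $ v = 0"
      using that pendant M0[of i v] by (auto simp: underlying_def T_def)
    then show ?thesis
      using Mvu S unfolding row_v
      by (auto simp: vec_eq_iff induced_row_def T_def M_def e_def axis_def)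
  qed
  have "induced_row D S v \<in> span R"
    using S by (auto simp: R_def intro: span_base)
  then have "e \<in> span R"
    using span_mul[of "induced_row D S v" R "1 / M $ v $ u"] Mvu by (simp add: row_v)
  moreover have "induced_row D T ` T \<subseteq> span R"
  proof
    fix r assume "r \<in> induced_row D T ` T"
    then obtain i where "i \<in> T" "r = induced_row D T i" by auto
    moreover have "induced_row D S i \<in> span R"
      using \<open>i \<in> T\<close> by (auto simp: R_def T_def intro: span_base)
    ultimately show "r \<in> span R"
      using row_T \<open>induced_row D S v \<in> span R\<close> by (simp add: span_diff span_mul)
  qed
  moreover have "induced_row D S u \<in> span R"
    using S by (auto simp: R_def intro: span_base)
  ultimately have "dim (insert (induced_row D S u) (insert e (induced_row D T ` T))) \<le> dim R"
    using dim_subset[of _ "span R"] by auto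
  moreover have "e \<notin> span (induced_row D T ` T)"
    using span_component_eq_0[of "induced_row D T ` T" u e]
    by (auto simp: induced_row_def T_def e_def)
  moreover have "induced_row D S u \<notin> span (insert e (induced_row D T ` T))"
  proof
    assume "induced_row D S u \<in> span (insert e (induced_row D T ` T))"
    moreover have "\<forall>x\<in>insert e (induced_row D T ` T). x $ v = 0"
      using \<open>u \<noteq> v\<close> by (auto simp: induced_row_def T_def e_def axis_def)
    ultimately have "induced_row D S u $ v = 0"
      using span_component_eq_0 by blast
    then show False
      using S uv skew_adj_nonzero_iff[OF ori, of u v] by (auto simp: induced_row_def underlying_def)
  qed
  ultimately show ?thesis
    by (simp add: dim_insert induced_skew_rank_def T_def R_def)
qed

lemma skew_rank_ge_2_if_edge:
  fixes D :: "'n::finite \<Rightarrow> 'n \<Rightarrow> bool"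
  assumes ori: "oriented D" and "underlying D u v"
  shows "2 \<le> skew_rank D"
proof -
  have "induced_skew_rank D ({v, u} - {v, u}) + 2 \<le> induced_skew_rank D {v, u}"
    by (rule induced_skew_rank_remove_pendant[OF ori])
      (use assms in \<open>auto simp: underlying_def oriented_def\<close>)
  moreover have "induced_skew_rank D {v, u} \<le> induced_skew_rank D UNIV"
    by (rule induced_skew_rank_mono) auto
  ultimately show ?thesis
    by (simp add: induced_skew_rank_UNIV)
qed

lemma skew_rank_le_2_if_edges_at:
  fixes D :: "'n::finite \<Rightarrow> 'n \<Rightarrow> bool"
  assumes ori: "oriented D" and at_w: "\<forall>x y. underlying D x y \<longrightarrow> x = w \<or> y = w"
  shows "skew_rank D \<le> 2"
proof -
  have "induced_row D UNIV i \<in> span {axis w 1, induced_row D UNIV w}" for i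
  proof (cases "i = w")
    case False
    then have "induced_row D UNIV i = (skew_adj D $ i $ w) *\<^sub>R axis w 1"
      using at_w skew_adj_nonzero_iff[OF ori, of i]
      by (auto simp: vec_eq_iff induced_row_def axis_def)
    then show ?thesis
      by (simp add: span_base span_mul)
  qed (simp add: span_base)
  then have "dim (induced_row D UNIV ` UNIV) \<le> card {axis w 1, induced_row D UNIV w}"
    by (intro dim_le_card) auto
  also have "\<dots> \<le> 2"
    by (simp add: card_insert_if)
  finally show ?thesis
    by (simp add: induced_skew_rank_def induced_skew_rank_UNIV[symmetric])
qed

section \<open>Invariants of induced subgraphs\<close>

lemma symp_underlying: "symp (underlying D)"
  by (auto simp: symp_def underlying_def)

lemma irreflp_underlying: "oriented D \<Longrightarrow> irreflp (underlying D)"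
  by (auto simp: irreflp_def underlying_def oriented_def)

definition adjacent_pairs :: "('n \<Rightarrow> 'n \<Rightarrow> bool) \<Rightarrow> 'n set \<Rightarrow> nat" where
  "adjacent_pairs E S = card {(x, y). x \<in> S \<and> y \<in> S \<and> E x y}"

lemma adjacent_pairs_remove_vertex:
  fixes E :: "'n::finite \<Rightarrow> 'n \<Rightarrow> bool"
  assumes "symp E" "irreflp E" and "v \<in> S"
  shows "adjacent_pairs E S = adjacent_pairs E (S - {v}) + 2 * card {y\<in>S. E v y}"
proof -
  let ?N = "{y\<in>S. E v y}"
  let ?P = "{(x, y). x \<in> S - {v} \<and> y \<in> S - {v} \<and> E x y}"
  have "{(x, y). x \<in> S \<and> y \<in> S \<and> E x y} = ?P \<union> (Pair v ` ?N \<union> (\<lambda>y. (y, v)) ` ?N)"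
    using assms by (auto dest: sympD irreflpD)
  moreover have "card (Pair v ` ?N \<union> (\<lambda>y. (y, v)) ` ?N) = 2 * card ?N"
    using assms(2) by (subst card_Un_disjoint) (auto simp: card_image inj_on_def dest: irreflpD)
  moreover have "card (?P \<union> (Pair v ` ?N \<union> (\<lambda>y. (y, v)) ` ?N))
      = card ?P + card (Pair v ` ?N \<union> (\<lambda>y. (y, v)) ` ?N)"
    by (rule card_Un_disjoint) auto
  ultimately show ?thesis
    by (simp add: adjacent_pairs_def)
qed

definition induced_independence_number :: "('n::finite \<Rightarrow> 'n \<Rightarrow> bool) \<Rightarrow> 'n set \<Rightarrow> nat" where
  "induced_independence_number E S = Max {card T | T. T \<subseteq> S \<and> independent_set E T}"

lemma finite_independent_set_cards: "finite {card T | T. T \<subseteq> S \<and> independent_set E (T::'n::finite set)}"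
proof (rule finite_subset)
  show "{card T | T. T \<subseteq> S \<and> independent_set E T} \<subseteq> card ` (UNIV :: 'n set set)"
    by auto
qed simp

lemma induced_independence_number_ge:
  "T \<subseteq> S \<Longrightarrow> independent_set E T \<Longrightarrow> card T \<le> induced_independence_number E S"
  unfolding induced_independence_number_def by (rule Max_ge[OF finite_independent_set_cards]) auto

lemma obtain_maximum_independent_set:
  fixes S :: "'n::finite set"
  obtains T where "T \<subseteq> S" "independent_set E T" "card T = induced_independence_number E S"
proof -
  have "{} \<subseteq> S \<and> independent_set E {}"
    by (simp add: independent_set_def)
  then have "{card T | T. T \<subseteq> S \<and> independent_set E T} \<noteq> {}"
    by blast
  then have "induced_independence_number E S \<in> {card T | T. T \<subseteq> S \<and> independent_set E T}"
    unfolding induced_independence_number_def by (rule Max_in[OF finite_independent_set_cards])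
  then show ?thesis
    using that by auto
qed

lemma induced_independence_number_mono:
  "T \<subseteq> S \<Longrightarrow> induced_independence_number E T \<le> induced_independence_number E S"
proof -
  assume "T \<subseteq> S"
  obtain I where "I \<subseteq> T" "independent_set E I" "card I = induced_independence_number E T"
    by (rule obtain_maximum_independent_set)
  then show ?thesis
    using \<open>T \<subseteq> S\<close> induced_independence_number_ge[of I S E] by simp
qed

lemma induced_independence_number_UNIV:
  "induced_independence_number E UNIV = independence_number E"
  by (simp add: induced_independence_number_def independence_number_def)

lemma induced_independence_number_add_isolated:
  fixes E :: "'n::finite \<Rightarrow> 'n \<Rightarrow> bool"
  assumes "symp E" "irreflp E" and "v \<in> S" "T \<subseteq> S - {v}" and "\<forall>y\<in>T. \<not> E v y"
  shows "induced_independence_number E T + 1 \<le> induced_independence_number E S"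
proof -
  obtain I where I: "I \<subseteq> T" "independent_set E I" "card I = induced_independence_number E T"
    by (rule obtain_maximum_independent_set)
  have "independent_set E (insert v I)"
    using assms I by (auto simp: independent_set_def dest: sympD irreflpD)
  then have "card (insert v I) \<le> induced_independence_number E S"
    using assms I by (intro induced_independence_number_ge) auto
  moreover have "v \<notin> I"
    using assms I by auto
  ultimately show ?thesis
    using I by (simp add: finite_subset)
qed

definition edge_constant :: "('n \<Rightarrow> 'n \<Rightarrow> bool) \<Rightarrow> 'n set \<Rightarrow> ('n \<Rightarrow> nat) \<Rightarrow> bool" where
  "edge_constant E S c \<longleftrightarrow> (\<forall>x\<in>S. \<forall>y\<in>S. E x y \<longrightarrow> c x = c y)"

text \<open>The number of connected components of E restricted to S: a colouring that is constant
  along edges is constant on each component, and colouring the components apart attains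
  the maximum.\<close>

definition component_count :: "('n::finite \<Rightarrow> 'n \<Rightarrow> bool) \<Rightarrow> 'n set \<Rightarrow> nat" where
  "component_count E S = Max {card (c ` S) | c. edge_constant E S c}"

lemma finite_colouring_cards: "finite {card (c ` S) | c. edge_constant E S (c::'n::finite \<Rightarrow> nat)}"
proof (rule finite_subset)
  show "{card (c ` S) | c. edge_constant E S c} \<subseteq> {..card S}"
    by (auto simp: card_image_le)
qed simp

lemma component_count_ge: "edge_constant E S c \<Longrightarrow> card (c ` S) \<le> component_count E S"
  unfolding component_count_def by (rule Max_ge[OF finite_colouring_cards]) auto

lemma obtain_component_colouring:
  fixes S :: "'n::finite set"
  obtains c where "edge_constant E S c" "card (c ` S) = component_count E S"
proof -
  have "edge_constant E S (\<lambda>_. 0)"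
    by (simp add: edge_constant_def)
  then have "{card (c ` S) | c. edge_constant E S c} \<noteq> {}"
    by blast
  then have "component_count E S \<in> {card (c ` S) | c. edge_constant E S c}"
    unfolding component_count_def by (rule Max_in[OF finite_colouring_cards])
  then show ?thesis
    using that by auto
qed

text \<open>Removing a nonempty set X whose neighbours in S lie in N: the components of S - X that
  meet N merge with X into one component of S, all others survive.\<close>

lemma component_count_remove:
  fixes E :: "'n::finite \<Rightarrow> 'n \<Rightarrow> bool"
  assumes "symp E" and X: "X \<subseteq> S" "X \<noteq> {}" and N: "N \<subseteq> S - X"
    and out: "\<forall>x\<in>X. \<forall>y\<in>S - X. E x y \<longrightarrow> y \<in> N"
    and c: "edge_constant E (S - X) c"
  shows "card (c ` (S - X)) + 1 \<le> component_count E S + card (c ` N)"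
proof -
  obtain L where L: "L \<notin> c ` (S - X)"
    using ex_new_if_finite[OF infinite_UNIV_nat, of "c ` (S - X)"] by auto
  define c' where "c' x = (if x \<in> X \<or> c x \<in> c ` N then L else c x)" for x
  have merged: "c' x = L" if "x \<in> X \<or> x \<in> N" for x
    using that by (auto simp: c'_def)
  have "c' x = c' y" if xy: "x \<in> S" "y \<in> S" "E x y" for x y
  proof -
    have "E y x"
      using \<open>symp E\<close> xy(3) by (rule sympD)
    then consider "x \<in> X \<or> x \<in> N" "y \<in> X \<or> y \<in> N" | "x \<in> S - X" "y \<in> S - X"
      using xy out by blast
    then show ?thesis
    proof cases
      case 2
      then have "c x = c y"
        using c xy(3) by (simp add: edge_constant_def)
      then show ?thesis
        using 2 by (simp add: c'_def)
    qed (simp add: merged)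
  qed
  then have "card (c' ` S) \<le> component_count E S"
    by (intro component_count_ge) (simp add: edge_constant_def)
  moreover have "insert L (c ` (S - X) - c ` N) \<subseteq> c' ` S"
  proof -
    have "L \<in> c' ` S"
      using X merged by blast
    moreover have "c t \<in> c' ` S" if "t \<in> S - X" "c t \<notin> c ` N" for t
      using that by (intro image_eqI[of _ _ t]) (simp_all add: c'_def)
    ultimately show ?thesis
      by blast
  qed
  then have "card (insert L (c ` (S - X) - c ` N)) \<le> card (c' ` S)"
    by (intro card_mono) auto
  moreover have "card (c ` (S - X) - c ` N) = card (c ` (S - X)) - card (c ` N)"
    using N by (intro card_Diff_subset) auto
  moreover have "card (c ` N) \<le> card (c ` (S - X))"
    using N by (intro card_mono) auto
  ultimately show ?thesis
    using L by simp
qed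

lemma edge_constant_on_path:
  assumes "successively E xs" "set xs \<subseteq> S" "edge_constant E S c" "z \<in> set xs"
  shows "c z = c (hd xs)"
  using assms
proof (induction xs rule: induct_list012)
  case (3 x y zs)
  then show ?case
    by (auto simp: edge_constant_def)
qed auto

lemma component_count_le_1_if_connected:
  fixes E :: "'n::finite \<Rightarrow> 'n \<Rightarrow> bool"
  assumes "connected_graph E"
  shows "component_count E UNIV \<le> 1"
proof -
  obtain c where c: "edge_constant E UNIV c" "card (c ` UNIV) = component_count E UNIV"
    by (rule obtain_component_colouring)
  have "c x = c y" if "E\<^sup>*\<^sup>* x y" for x y
    using that c(1) by (induction rule: rtranclp_induct) (auto simp: edge_constant_def)
  then have "c ` UNIV \<subseteq> {c undefined}"
    using assms by (auto simp: connected_graph_def)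
  then show ?thesis
    using c(2) card_mono[of "{c undefined}" "c ` UNIV"] by simp
qed

section \<open>The inequality sr + 2 alpha + 2m + 2c \<ge> 4n\<close>

lemma obtain_path_end:
  fixes E :: "'n::finite \<Rightarrow> 'n \<Rightarrow> bool"
  assumes "symp E" "irreflp E" and "S \<noteq> {}"
  obtains v ys where "v \<in> S" "set ys \<subseteq> S - {v}" "successively E ys" "{y\<in>S. E v y} \<subseteq> set ys"
proof -
  define path where "path xs \<longleftrightarrow> xs \<noteq> [] \<and> distinct xs \<and> set xs \<subseteq> S \<and> successively E xs" for xs
  obtain x where "x \<in> S"
    using assms(3) by blast
  then have "path [x]"
    by (simp add: path_def)
  moreover have "length xs < card S + 1" if "path xs" for xs
    using that card_mono[of S "set xs"] distinct_card[of xs] by (simp add: path_def)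
  ultimately obtain xs where xs: "path xs" and longest: "\<And>xs'. path xs' \<Longrightarrow> length xs' \<le> length xs"
    using ex_has_greatest_nat[of path "[x]" length "card S + 1"] by blast
  then obtain v ys where v_ys: "xs = v # ys"
    by (cases xs) (auto simp: path_def)
  have "y \<in> set ys" if "y \<in> S" "E v y" for y
  proof (rule ccontr)
    assume "y \<notin> set ys"
    moreover have "y \<noteq> v" "E y v"
      using that assms(1,2) by (auto dest: sympD irreflpD)
    ultimately have "path (y # xs)"
      using xs v_ys that by (auto simp: path_def)
    then show False
      using longest by fastforce
  qed
  moreover have "v \<in> S" "set ys \<subseteq> S - {v}" "successively E ys"
    using xs v_ys by (auto simp: path_def successively_Cons)
  ultimately show ?thesis
    using that by blast
qed

text \<open>For S the whole vertex set this is sr + 2 alpha + 2m + 2c, as adjacent pairs are ordered.\<close>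

definition skew_potential :: "('n::finite \<Rightarrow> 'n \<Rightarrow> bool) \<Rightarrow> 'n set \<Rightarrow> nat" where
  "skew_potential D S = induced_skew_rank D S + 2 * induced_independence_number (underlying D) S
     + adjacent_pairs (underlying D) S + 2 * component_count (underlying D) S"

lemma skew_potential_remove_isolated:
  fixes D :: "'n::finite \<Rightarrow> 'n \<Rightarrow> bool"
  assumes ori: "oriented D" and v: "v \<in> S" and isolated: "\<forall>y\<in>S. \<not> underlying D v y"
  shows "skew_potential D (S - {v}) + 4 \<le> skew_potential D S"
proof -
  let ?E = "underlying D"
  note graph = symp_underlying irreflp_underlying[OF ori]
  obtain c where c: "edge_constant ?E (S - {v}) c" "card (c ` (S - {v})) = component_count ?E (S - {v})"
    by (rule obtain_component_colouring)
  have "card (c ` (S - {v})) + 1 \<le> component_count ?E S + card (c ` {})"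
    using v isolated c(1) by (intro component_count_remove graph) auto
  moreover have "induced_independence_number ?E (S - {v}) + 1 \<le> induced_independence_number ?E S"
    using v isolated by (intro induced_independence_number_add_isolated graph) auto
  moreover have "induced_skew_rank D (S - {v}) \<le> induced_skew_rank D S"
    by (rule induced_skew_rank_mono) auto
  moreover have "adjacent_pairs ?E S = adjacent_pairs ?E (S - {v})"
    using adjacent_pairs_remove_vertex[OF graph v] isolated by simp
  ultimately show ?thesis
    using c(2) by (simp add: skew_potential_def)
qed

lemma skew_potential_remove_pendant:
  fixes D :: "'n::finite \<Rightarrow> 'n \<Rightarrow> bool"
  assumes ori: "oriented D" and S: "u \<in> S" "v \<in> S" and uv: "underlying D v u"
    and pendant: "\<forall>y\<in>S. underlying D v y \<longrightarrow> y = u"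
  shows "skew_potential D (S - {u, v}) + 8 \<le> skew_potential D S"
proof -
  let ?E = "underlying D" and ?T = "S - {u, v}"
  note graph = symp_underlying irreflp_underlying[OF ori]
  define N where "N = {y \<in> S - {v}. ?E u y}"
  have "u \<noteq> v"
    using uv graph(2) by (auto dest: irreflpD)
  have neighbours_v: "{y\<in>S. ?E v y} = {u}"
    using S uv pendant by blast
  obtain c where c: "edge_constant ?E ?T c" "card (c ` ?T) = component_count ?E ?T"
    by (rule obtain_component_colouring)
  have "\<forall>x\<in>{u, v}. \<forall>y\<in>S - {u, v}. ?E x y \<longrightarrow> y \<in> N"
    using pendant by (auto simp: N_def)
  moreover have "N \<subseteq> S - {u, v}"
    using graph(2) by (auto simp: N_def dest: irreflpD)
  ultimately have "card (c ` ?T) + 1 \<le> component_count ?E S + card (c ` N)"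
    using S c(1) by (intro component_count_remove[OF graph(1)]) auto
  moreover have "card (c ` N) \<le> card N"
    by (rule card_image_le) simp
  moreover have "induced_independence_number ?E ?T + 1 \<le> induced_independence_number ?E S"
    using pendant by (intro induced_independence_number_add_isolated[OF graph S(2)]) auto
  moreover have "induced_skew_rank D ?T + 2 \<le> induced_skew_rank D S"
    by (rule induced_skew_rank_remove_pendant[OF ori S uv pendant])
  moreover have "adjacent_pairs ?E S = adjacent_pairs ?E (S - {v}) + 2"
    using adjacent_pairs_remove_vertex[OF graph S(2)] neighbours_v by simp
  moreover have "adjacent_pairs ?E (S - {v}) = adjacent_pairs ?E ?T + 2 * card N"
  proof -
    have "S - {v} - {u} = ?T"
      by auto
    then show ?thesis
      using adjacent_pairs_remove_vertex[OF graph, of u "S - {v}"] S \<open>u \<noteq> v\<close> by (simp add: N_def)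
  qed
  ultimately show ?thesis
    using c(2) by (simp add: skew_potential_def)
qed

lemma skew_potential_remove_path_end:
  fixes D :: "'n::finite \<Rightarrow> 'n \<Rightarrow> bool"
  assumes ori: "oriented D" and v: "v \<in> S" and ys: "set ys \<subseteq> S - {v}" "successively (underlying D) ys"
    and on_path: "{y\<in>S. underlying D v y} \<subseteq> set ys" and two: "2 \<le> card {y\<in>S. underlying D v y}"
  shows "skew_potential D (S - {v}) + 4 \<le> skew_potential D S"
proof -
  let ?E = "underlying D" and ?N = "{y\<in>S. underlying D v y}"
  note graph = symp_underlying irreflp_underlying[OF ori]
  obtain c where c: "edge_constant ?E (S - {v}) c" "card (c ` (S - {v})) = component_count ?E (S - {v})"
    by (rule obtain_component_colouring)
  have "c ` ?N \<subseteq> {c (hd ys)}"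
    using edge_constant_on_path[OF ys(2,1) c(1)] on_path by blast
  then have "card (c ` ?N) \<le> 1"
    using card_mono[of "{c (hd ys)}" "c ` ?N"] by simp
  moreover have "card (c ` (S - {v})) + 1 \<le> component_count ?E S + card (c ` ?N)"
    using v c(1) graph(2) by (intro component_count_remove[OF graph(1)]) (auto dest: irreflpD)
  moreover have "induced_independence_number ?E (S - {v}) \<le> induced_independence_number ?E S"
    by (rule induced_independence_number_mono) auto
  moreover have "induced_skew_rank D (S - {v}) \<le> induced_skew_rank D S"
    by (rule induced_skew_rank_mono) auto
  moreover have "adjacent_pairs ?E S = adjacent_pairs ?E (S - {v}) + 2 * card ?N"
    by (rule adjacent_pairs_remove_vertex[OF graph v])
  ultimately show ?thesis
    using c(2) two by (simp add: skew_potential_def)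
qed

lemma four_card_le_skew_potential:
  fixes D :: "'n::finite \<Rightarrow> 'n \<Rightarrow> bool"
  assumes ori: "oriented D"
  shows "4 * card S \<le> skew_potential D S"
proof (induction "card S" arbitrary: S rule: less_induct)
  case less
  show ?case
  proof (cases "S = {}")
    case False
    let ?E = "underlying D"
    obtain v ys where v: "v \<in> S" and ys: "set ys \<subseteq> S - {v}" "successively ?E ys"
      and on_path: "{y\<in>S. ?E v y} \<subseteq> set ys"
      using obtain_path_end[OF symp_underlying irreflp_underlying[OF ori] False] by blast
    have IH: "4 * card T \<le> skew_potential D T" if "T \<subset> S" for T
      using less.hyps that psubset_card_mono[of S T] by simp
    have card_v: "card S = card (S - {v}) + 1"
      using card_Suc_Diff1[of S v] v by simp
    consider "card {y\<in>S. ?E v y} = 0" | "card {y\<in>S. ?E v y} = 1" | "2 \<le> card {y\<in>S. ?E v y}"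
      by linarith
    then show ?thesis
    proof cases
      case 1
      then have "skew_potential D (S - {v}) + 4 \<le> skew_potential D S"
        using v by (intro skew_potential_remove_isolated[OF ori]) auto
      then show ?thesis
        using IH[of "S - {v}"] v card_v by fastforce
    next
      case 2
      then obtain u where "{y\<in>S. ?E v y} = {u}"
        by (auto simp: card_1_singleton_iff)
      then have u: "u \<in> S" "?E v u" "\<forall>y\<in>S. ?E v y \<longrightarrow> y = u"
        by blast+
      have "u \<noteq> v"
        using u(2) irreflp_underlying[OF ori] by (auto dest: irreflpD)
      have "S - {v} - {u} = S - {u, v}"
        by blast
      then have "card S = card (S - {u, v}) + 2"
        using card_v card_Suc_Diff1[of "S - {v}" u] u(1) \<open>u \<noteq> v\<close> by simp
      moreover have "skew_potential D (S - {u, v}) + 8 \<le> skew_potential D S"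
        by (rule skew_potential_remove_pendant[OF ori u(1) v u(2,3)])
      ultimately show ?thesis
        using IH[of "S - {u, v}"] v by fastforce
    next
      case 3
      then have "skew_potential D (S - {v}) + 4 \<le> skew_potential D S"
        using v ys on_path by (intro skew_potential_remove_path_end[OF ori])
      then show ?thesis
        using IH[of "S - {v}"] v card_v by fastforce
    qed
  qed simp
qed

section \<open>Counting pairs\<close>

lemma adjacent_pairs_UNIV:
  fixes E :: "'n::finite \<Rightarrow> 'n \<Rightarrow> bool"
  assumes "symp E" "irreflp E"
  shows "adjacent_pairs E UNIV = 2 * num_edges E"
proof -
  define edges where "edges = {{x, y} | x y. E x y}"
  define pairs where "pairs e = {p. E (fst p) (snd p) \<and> {fst p, snd p} = e}" for e
  have "{(x, y). x \<in> UNIV \<and> y \<in> UNIV \<and> E x y} = (\<Union>e\<in>edges. pairs e)"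
    by (auto simp: pairs_def edges_def; blast)
  moreover have "card (\<Union>e\<in>edges. pairs e) = (\<Sum>e\<in>edges. card (pairs e))"
    by (rule card_UN_disjoint) (auto simp: pairs_def)
  moreover have "card (pairs e) = 2" if "e \<in> edges" for e
  proof -
    obtain x y where e: "e = {x, y}" "E x y"
      using \<open>e \<in> edges\<close> by (auto simp: edges_def)
    then have "x \<noteq> y"
      using assms(2) by (auto dest: irreflpD)
    moreover have "pairs e = {(x, y), (y, x)}"
      using e assms by (auto simp: pairs_def doubleton_eq_iff dest: sympD)
    ultimately show ?thesis
      by simp
  qed
  ultimately show ?thesis
    by (simp add: adjacent_pairs_def num_edges_def edges_def)
qed

lemma card_off_diagonal:
  fixes I :: "'n::finite set"
  shows "card {(x, y). x \<in> I \<and> y \<in> I \<and> x \<noteq> y} = card I * (card I - 1)"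
proof -
  have "{(x, y). x \<in> I \<and> y \<in> I \<and> x \<noteq> y} = I \<times> I - (\<lambda>x. (x, x)) ` I"
    by auto
  moreover have "card ((\<lambda>x. (x, x)) ` I) = card I"
    by (rule card_image) (auto simp: inj_on_def)
  moreover have "card (I \<times> I - (\<lambda>x. (x, x)) ` I) = card (I \<times> I) - card ((\<lambda>x. (x, x)) ` I)"
    by (rule card_Diff_subset) auto
  ultimately show ?thesis
    by (simp add: card_cartesian_product diff_mult_distrib2)
qed

lemma adjacent_pairs_independent_set:
  fixes E :: "'n::finite \<Rightarrow> 'n \<Rightarrow> bool"
  assumes "irreflp E" and "independent_set E I"
  shows "adjacent_pairs E UNIV + card I * (card I - 1) + card {(x, y). x \<noteq> y \<and> \<not> E x y \<and> \<not> (x \<in> I \<and> y \<in> I)}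
    = CARD('n) * (CARD('n) - 1)"
proof -
  let ?A = "{(x, y). x \<in> UNIV \<and> y \<in> UNIV \<and> E x y}"
  let ?B = "{(x, y). x \<in> I \<and> y \<in> I \<and> x \<noteq> y}"
  let ?C = "{(x, y). x \<noteq> y \<and> \<not> E x y \<and> \<not> (x \<in> I \<and> y \<in> I)}"
  have "?A \<union> ?B \<union> ?C = {(x, y). x \<in> UNIV \<and> y \<in> UNIV \<and> x \<noteq> y}"
    using assms(1) by (auto dest: irreflpD)
  moreover have "card (?A \<union> ?B) = card ?A + card ?B"
    using assms(2) by (intro card_Un_disjoint) (auto simp: independent_set_def)
  moreover have "card (?A \<union> ?B \<union> ?C) = card (?A \<union> ?B) + card ?C"
    by (intro card_Un_disjoint) auto
  ultimately show ?thesis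
    using card_off_diagonal[of I] card_off_diagonal[of "UNIV :: 'n set"] by (simp add: adjacent_pairs_def)
qed

section \<open>The arithmetic of the bound\<close>

lemma real_sqrt_quarter_ge:
  fixes a q :: real
  assumes "a * (a - 1) \<le> q" and "1/2 \<le> a"
  shows "a - 1/2 \<le> sqrt (q + 1/4)" and "sqrt (q + 1/4) = a - 1/2 \<longleftrightarrow> q = a * (a - 1)"
proof -
  have square: "(a - 1/2)\<^sup>2 = a * (a - 1) + 1/4"
    by (simp add: power2_eq_square algebra_simps)
  then show "a - 1/2 \<le> sqrt (q + 1/4)"
    using assms(1) by (intro real_le_rsqrt) simp
  show "sqrt (q + 1/4) = a - 1/2 \<longleftrightarrow> q = a * (a - 1)"
  proof
    assume "sqrt (q + 1/4) = a - 1/2"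
    then have "q + 1/4 = (a - 1/2)\<^sup>2"
      using assms square by (metis add_le_cancel_right real_sqrt_pow2 order_trans zero_le_power2)
    then show "q = a * (a - 1)"
      using square by simp
  next
    assume "q = a * (a - 1)"
    then show "sqrt (q + 1/4) = a - 1/2"
      using assms(2) square by (intro real_sqrt_unique) simp_all
  qed
qed

lemma of_nat_mult_pred: "real (k * (k - 1)) = real k * (real k - 1)"
  by (cases k) (auto simp: algebra_simps)

lemma sqrt_lower_bound:
  fixes s a m n :: nat
  assumes potential: "4 * n \<le> s + 2 * a + 2 * m + 2"
    and pairs: "2 * m + a * (a - 1) \<le> n * (n - 1)" and "1 \<le> a"
  shows "4 * real n - 2 * real m - sqrt (real n * (real n - 1) - 2 * real m + 1/4) - 5/2 \<le> real s + real a"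
    and "real s + real a = 4 * real n - 2 * real m - sqrt (real n * (real n - 1) - 2 * real m + 1/4) - 5/2
      \<longleftrightarrow> s + 2 * a + 2 * m + 2 = 4 * n \<and> 2 * m + a * (a - 1) = n * (n - 1)"
proof -
  define q where "q = real n * (real n - 1) - 2 * real m"
  have "real (2 * m + a * (a - 1)) \<le> real (n * (n - 1))"
    using pairs by linarith
  then have "real a * (real a - 1) \<le> q"
    unfolding q_def of_nat_add of_nat_mult_pred by simp
  note sqrt_q = real_sqrt_quarter_ge[OF this]
  have "real a - 1/2 \<le> sqrt (q + 1/4)"
    using sqrt_q(1) \<open>1 \<le> a\<close> by simp
  moreover have "sqrt (q + 1/4) = real a - 1/2 \<longleftrightarrow> 2 * m + a * (a - 1) = n * (n - 1)"
  proof -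
    have "2 * m + a * (a - 1) = n * (n - 1) \<longleftrightarrow> real (2 * m + a * (a - 1)) = real (n * (n - 1))"
      by linarith
    then show ?thesis
      using sqrt_q(2) \<open>1 \<le> a\<close> unfolding q_def of_nat_add of_nat_mult_pred by auto
  qed
  moreover have "4 * real n \<le> real s + 2 * real a + 2 * real m + 2"
    using potential by linarith
  ultimately show "4 * real n - 2 * real m - sqrt (real n * (real n - 1) - 2 * real m + 1/4) - 5/2 \<le> real s + real a"
    and "real s + real a = 4 * real n - 2 * real m - sqrt (real n * (real n - 1) - 2 * real m + 1/4) - 5/2
      \<longleftrightarrow> s + 2 * a + 2 * m + 2 = 4 * n \<and> 2 * m + a * (a - 1) = n * (n - 1)"
    unfolding q_def by linarith+
qed

text \<open>With n = a + q the two equations give s + 2 + q (2a + q - 1) = 2a + 4q, so s \<ge> 2 forces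
  (q - 1) (2a + q - 4) \<le> 0.\<close>

lemma tight_case_split:
  fixes s a m n :: nat
  assumes "s + 2 * a + 2 * m + 2 = 4 * n" "2 * m + a * (a - 1) = n * (n - 1)"
    and "2 \<le> s" "1 \<le> a" "a < n"
  shows "n = a + 1 \<or> (n = 3 \<and> a = 1)"
proof -
  define q where "q = n - a"
  then have n: "n = a + q" and "1 \<le> q"
    using \<open>a < n\<close> by simp_all
  have "real (2 * m + a * (a - 1)) = real (n * (n - 1))"
    using assms(2) by (simp only:)
  then have "2 * real m + real a * (real a - 1) = (real a + real q) * (real a + real q - 1)"
    unfolding of_nat_add of_nat_mult_pred n by simp
  moreover have "real s + 2 * real a + 2 * real m + 2 = 4 * (real a + real q)"
    using arg_cong[OF assms(1), of real] n by simp
  ultimately have "(real q - 1) * (2 * real a + real q - 4) \<le> 0"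
    using \<open>2 \<le> s\<close> by (simp add: algebra_simps)
  then have "q = 1 \<or> 2 * a + q \<le> 4"
    using \<open>1 \<le> q\<close> by (auto simp: mult_le_0_iff)
  then show ?thesis
    using n \<open>1 \<le> a\<close> \<open>1 \<le> q\<close> by auto
qed

section \<open>Connected graphs and the extremal cases\<close>

lemma one_le_independence_number:
  fixes E :: "'n::finite \<Rightarrow> 'n \<Rightarrow> bool"
  assumes "irreflp E"
  shows "1 \<le> independence_number E"
proof -
  have "independent_set E {undefined}"
    using assms by (auto simp: independent_set_def dest: irreflpD)
  then show ?thesis
    using induced_independence_number_ge[of "{undefined}" UNIV E]
    by (simp add: induced_independence_number_UNIV)
qed

lemma independence_number_less_card:
  fixes E :: "'n::finite \<Rightarrow> 'n \<Rightarrow> bool"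
  assumes "E u v"
  shows "independence_number E < CARD('n)"
proof -
  obtain I where "independent_set E I" "card I = independence_number E"
    using obtain_maximum_independent_set[of UNIV E] by (auto simp: induced_independence_number_UNIV)
  moreover from this have "I \<subset> UNIV"
    using assms by (auto simp: independent_set_def)
  ultimately show ?thesis
    using psubset_card_mono[of UNIV I] by simp
qed

lemma connected_graph_obtain_edge:
  fixes E :: "'n \<Rightarrow> 'n \<Rightarrow> bool" and x y :: 'n
  assumes "connected_graph E" and "x \<noteq> y"
  obtains u v where "E u v"
proof -
  have "E\<^sup>*\<^sup>* x y"
    using assms(1) by (simp add: connected_graph_def)
  then show ?thesis
    using assms(2) that by (cases rule: converse_rtranclpE) auto
qed

lemma num_edges_eq_iff_complete_split:
  fixes E :: "'n::finite \<Rightarrow> 'n \<Rightarrow> bool"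
  assumes "symp E" "irreflp E" and "independent_set E I"
  shows "2 * num_edges E + card I * (card I - 1) = CARD('n) * (CARD('n) - 1)
    \<longleftrightarrow> (\<forall>x y. E x y \<longleftrightarrow> x \<noteq> y \<and> \<not> (x \<in> I \<and> y \<in> I))"
proof -
  let ?C = "{(x, y). x \<noteq> y \<and> \<not> E x y \<and> \<not> (x \<in> I \<and> y \<in> I)}"
  have "2 * num_edges E + card I * (card I - 1) = CARD('n) * (CARD('n) - 1) \<longleftrightarrow> card ?C = 0"
    using adjacent_pairs_independent_set[OF assms(2,3)] adjacent_pairs_UNIV[OF assms(1,2)] by linarith
  also have "\<dots> \<longleftrightarrow> ?C = {}"
    by simp
  also have "\<dots> \<longleftrightarrow> (\<forall>x y. E x y \<longleftrightarrow> x \<noteq> y \<and> \<not> (x \<in> I \<and> y \<in> I))"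
    using assms by (auto simp: independent_set_def dest: irreflpD)
  finally show ?thesis .
qed

lemma num_edges_independence_number_le:
  fixes E :: "'n::finite \<Rightarrow> 'n \<Rightarrow> bool"
  assumes "symp E" "irreflp E"
  shows "2 * num_edges E + independence_number E * (independence_number E - 1) \<le> CARD('n) * (CARD('n) - 1)"
proof -
  obtain I where "independent_set E I" "card I = independence_number E"
    using obtain_maximum_independent_set[of UNIV E] by (auto simp: induced_independence_number_UNIV)
  then show ?thesis
    using adjacent_pairs_independent_set[of E I] adjacent_pairs_UNIV[OF assms] assms(2) by simp
qed

lemma four_card_le_skew_rank_independence_number_num_edges:
  fixes D :: "'n::finite \<Rightarrow> 'n \<Rightarrow> bool"
  assumes "oriented D" and "connected_graph (underlying D)"
  shows "4 * CARD('n) \<le> skew_rank D + 2 * independence_number (underlying D) + 2 * num_edges (underlying D) + 2"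
  using four_card_le_skew_potential[OF assms(1), of UNIV]
    component_count_le_1_if_connected[OF assms(2)]
    adjacent_pairs_UNIV[OF symp_underlying irreflp_underlying[OF assms(1)]]
  by (simp add: skew_potential_def induced_skew_rank_UNIV induced_independence_number_UNIV)

lemma graph_iso_star_graph_iff:
  fixes E :: "'n::finite \<Rightarrow> 'n \<Rightarrow> bool"
  shows "graph_iso E {0..<CARD('n)} star_graph \<longleftrightarrow> (\<exists>w. \<forall>x y. E x y \<longleftrightarrow> x \<noteq> y \<and> (x = w \<or> y = w))"
proof
  assume "graph_iso E {0..<CARD('n)} star_graph"
  then obtain f where f: "bij_betw f UNIV {0..<CARD('n)}" "\<forall>x y. E x y \<longleftrightarrow> star_graph (f x) (f y)"
    by (auto simp: graph_iso_def)
  moreover have "0 \<in> f ` UNIV"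
    using f(1) by (simp add: bij_betw_def)
  ultimately obtain w where "f w = 0"
    by auto
  moreover have "inj f"
    using f(1) by (simp add: bij_betw_def)
  ultimately have "E x y \<longleftrightarrow> x \<noteq> y \<and> (x = w \<or> y = w)" for x y
    using f(2) by (auto simp: star_graph_def inj_eq) (metis inj_eq)+
  then show "\<exists>w. \<forall>x y. E x y \<longleftrightarrow> x \<noteq> y \<and> (x = w \<or> y = w)"
    by blast
next
  assume "\<exists>w. \<forall>x y. E x y \<longleftrightarrow> x \<noteq> y \<and> (x = w \<or> y = w)"
  then obtain w where star: "\<forall>x y. E x y \<longleftrightarrow> x \<noteq> y \<and> (x = w \<or> y = w)"
    by blast
  obtain g where g: "bij_betw g (UNIV :: 'n set) {0..<CARD('n)}"
    using ex_bij_betw_finite_nat[of "UNIV :: 'n set"] by auto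
  then have "g w < CARD('n)"
    by (auto simp: bij_betw_def)
  define f where "f = Transposition.transpose (g w) 0 \<circ> g"
  have "bij_betw (Transposition.transpose (g w) 0) {0..<CARD('n)} {0..<CARD('n)}"
    using \<open>g w < CARD('n)\<close> by (intro bij_betw_transpose_iff) auto
  then have f: "bij_betw f UNIV {0..<CARD('n)}"
    unfolding f_def using g by (rule bij_betw_trans[rotated])
  then have "inj f"
    by (simp add: bij_betw_def)
  moreover have "f w = 0"
    by (simp add: f_def)
  ultimately have "f x = 0 \<longleftrightarrow> x = w" for x
    by (metis injD)
  then have "E x y \<longleftrightarrow> star_graph (f x) (f y)" for x y
    using star \<open>inj f\<close> by (auto simp: star_graph_def inj_eq)
  then show "graph_iso E {0..<CARD('n)} star_graph"
    using f by (auto simp: graph_iso_def)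
qed

lemma graph_iso_triangle_graph_iff:
  fixes E :: "'n::finite \<Rightarrow> 'n \<Rightarrow> bool"
  shows "graph_iso E {0..<3} triangle_graph \<longleftrightarrow> CARD('n) = 3 \<and> (\<forall>x y. E x y \<longleftrightarrow> x \<noteq> y)"
proof
  assume "graph_iso E {0..<3} triangle_graph"
  then obtain f where f: "bij_betw f (UNIV :: 'n set) {0..<3}" "\<forall>x y. E x y \<longleftrightarrow> triangle_graph (f x) (f y)"
    by (auto simp: graph_iso_def)
  then have "CARD('n) = 3" "inj f"
    using bij_betw_same_card[OF f(1)] by (simp_all add: bij_betw_def)
  then show "CARD('n) = 3 \<and> (\<forall>x y. E x y \<longleftrightarrow> x \<noteq> y)"
    using f(2) by (auto simp: triangle_graph_def inj_eq)
next
  assume "CARD('n) = 3 \<and> (\<forall>x y. E x y \<longleftrightarrow> x \<noteq> y)"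
  moreover obtain g where g: "bij_betw g (UNIV :: 'n set) {0..<CARD('n)}"
    using ex_bij_betw_finite_nat[of "UNIV :: 'n set"] by auto
  moreover from g have "inj g"
    by (simp add: bij_betw_def)
  ultimately show "graph_iso E {0..<3} triangle_graph"
    by (auto simp: graph_iso_def triangle_graph_def inj_eq)
qed

lemma tight_imp_star_or_triangle:
  fixes D :: "'n::finite \<Rightarrow> 'n \<Rightarrow> bool"
  defines "E \<equiv> underlying D" and "a \<equiv> independence_number (underlying D)" and "n \<equiv> CARD('n)"
  assumes ori: "oriented D" and conn: "connected_graph E"
    and tight: "skew_rank D + 2 * a + 2 * num_edges E + 2 = 4 * n"
      "2 * num_edges E + a * (a - 1) = n * (n - 1)"
  shows "(\<exists>w. \<forall>x y. E x y \<longleftrightarrow> x \<noteq> y \<and> (x = w \<or> y = w)) \<or> (n = 3 \<and> (\<forall>x y. E x y \<longleftrightarrow> x \<noteq> y))"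
proof -
  note graph = symp_underlying[of D, folded E_def] irreflp_underlying[OF ori, folded E_def]
  obtain I where I: "independent_set E I" "card I = a"
    using obtain_maximum_independent_set[of UNIV E] by (auto simp: induced_independence_number_UNIV a_def E_def)
  have split: "E x y \<longleftrightarrow> x \<noteq> y \<and> \<not> (x \<in> I \<and> y \<in> I)" for x y
    using num_edges_eq_iff_complete_split[OF graph I(1)] tight(2) I(2) by (simp add: n_def)
  show ?thesis
  proof (cases "\<exists>x y :: 'n. x \<noteq> y")
    case False
    then have "\<forall>x y. E x y \<longleftrightarrow> x \<noteq> y \<and> (x = undefined \<or> y = undefined)"
      using graph(2) by (metis irreflpD)
    then show ?thesis
      by blast
  next
    case True
    then obtain u v where "E u v"
      using conn by (metis connected_graph_obtain_edge)
    then have "2 \<le> skew_rank D" and "a < n"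
      using skew_rank_ge_2_if_edge[OF ori] independence_number_less_card[of E]
      by (auto simp: E_def a_def n_def)
    moreover have "1 \<le> a"
      unfolding a_def by (rule one_le_independence_number[OF graph(2)[unfolded E_def]])
    ultimately consider "n = a + 1" | "n = 3" "a = 1"
      using tight_case_split[OF tight] by blast
    then show ?thesis
    proof cases
      case 1
      then have "card (UNIV - I) = 1"
        using I(2) by (simp add: card_Diff_subset n_def)
      then obtain w where "UNIV - I = {w}"
        by (auto simp: card_1_singleton_iff)
      then have "E x y \<longleftrightarrow> x \<noteq> y \<and> (x = w \<or> y = w)" for x y
        using split by blast
      then show ?thesis
        by blast
    next
      case 2
      then obtain z where "I = {z}"
        using I(2) by (auto simp: card_1_singleton_iff)
      then have "E x y \<longleftrightarrow> x \<noteq> y" for x y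
        using split by blast
      then show ?thesis
        using 2 by blast
    qed
  qed
qed

lemma star_imp_tight:
  fixes D :: "'n::finite \<Rightarrow> 'n \<Rightarrow> bool"
  defines "E \<equiv> underlying D" and "a \<equiv> independence_number (underlying D)" and "n \<equiv> CARD('n)"
  assumes ori: "oriented D" and conn: "connected_graph E"
    and star: "\<forall>x y. E x y \<longleftrightarrow> x \<noteq> y \<and> (x = w \<or> y = w)"
  shows "skew_rank D + 2 * a + 2 * num_edges E + 2 = 4 * n \<and> 2 * num_edges E + a * (a - 1) = n * (n - 1)"
proof -
  note graph = symp_underlying[of D, folded E_def] irreflp_underlying[OF ori, folded E_def]
  have lower: "4 * n \<le> skew_rank D + 2 * a + 2 * num_edges E + 2"
    using four_card_le_skew_rank_independence_number_num_edges[OF ori conn[unfolded E_def]]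
    by (simp add: E_def a_def n_def)
  have pairs: "2 * num_edges E + a * (a - 1) \<le> n * (n - 1)"
    using num_edges_independence_number_le[OF graph] by (simp add: a_def E_def n_def)
  have "1 \<le> a"
    unfolding a_def by (rule one_le_independence_number[OF graph(2)[unfolded E_def]])
  show ?thesis
  proof (cases "n = 1")
    case True
    then have "skew_rank D = 0"
      using skew_rank_less_card_if_odd[OF ori] by (simp add: n_def)
    moreover have "a = 1" "num_edges E = 0"
      using pairs \<open>1 \<le> a\<close> True by (auto simp: mult_eq_0_iff)
    ultimately show ?thesis
      using True by simp
  next
    case False
    have "UNIV \<noteq> {w}"
    proof
      assume "UNIV = {w}"
      then have "CARD('n) = card {w}"
        by (rule arg_cong)
      with False show False
        by (simp add: n_def)
    qed
    then obtain y where "y \<noteq> w"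
      by auto
    then have "E w y"
      using star by simp
    then have "a < n" and "skew_rank D \<le> 2"
      using independence_number_less_card[of E] skew_rank_le_2_if_edges_at[OF ori, of w] star
      by (auto simp: a_def n_def E_def)
    have indep: "independent_set E (UNIV - {w})"
      using star by (auto simp: independent_set_def)
    then have "n - 1 \<le> a"
      using induced_independence_number_ge[of "UNIV - {w}" UNIV E]
      by (simp add: a_def n_def E_def induced_independence_number_UNIV)
    with \<open>a < n\<close> have "a = n - 1"
      by simp
    moreover have "2 * num_edges E + (n - 1) * (n - 1 - 1) = n * (n - 1)"
      using num_edges_eq_iff_complete_split[OF graph indep] star by (auto simp: n_def)
    moreover define k where "k = n - 2"
    then have "n = Suc (Suc k)"
      using \<open>a < n\<close> \<open>1 \<le> a\<close> by simp
    ultimately show ?thesis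
      using lower \<open>skew_rank D \<le> 2\<close> by (simp add: algebra_simps)
  qed
qed

lemma triangle_imp_tight:
  fixes D :: "'n::finite \<Rightarrow> 'n \<Rightarrow> bool"
  defines "E \<equiv> underlying D" and "a \<equiv> independence_number (underlying D)" and "n \<equiv> CARD('n)"
  assumes ori: "oriented D" and conn: "connected_graph E"
    and triangle: "n = 3" "\<forall>x y. E x y \<longleftrightarrow> x \<noteq> y"
  shows "skew_rank D + 2 * a + 2 * num_edges E + 2 = 4 * n \<and> 2 * num_edges E + a * (a - 1) = n * (n - 1)"
proof -
  note graph = symp_underlying[of D, folded E_def] irreflp_underlying[OF ori, folded E_def]
  have lower: "4 * n \<le> skew_rank D + 2 * a + 2 * num_edges E + 2"
    using four_card_le_skew_rank_independence_number_num_edges[OF ori conn[unfolded E_def]]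
    by (simp add: E_def a_def n_def)
  have "skew_rank D < 3"
    using skew_rank_less_card_if_odd[OF ori] triangle(1) by (simp add: n_def)
  obtain I where I: "independent_set E I" "card I = a"
    using obtain_maximum_independent_set[of UNIV E] by (auto simp: induced_independence_number_UNIV a_def E_def)
  then have "a \<le> 1"
    using triangle(2) by (auto simp: independent_set_def card_le_Suc0_iff_eq)
  moreover have "1 \<le> a"
    unfolding a_def by (rule one_le_independence_number[OF graph(2)[unfolded E_def]])
  ultimately have "a = 1"
    by simp
  moreover have "2 * num_edges E + a * (a - 1) = n * (n - 1)"
    using num_edges_eq_iff_complete_split[OF graph I(1)] triangle(2) I(2) \<open>a = 1\<close>
    by (auto simp: n_def card_1_singleton_iff)
  ultimately show ?thesis
    using lower \<open>skew_rank D < 3\<close> triangle(1) by simp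
qed

theorem theorem1p4:
  fixes D :: "'n::finite \<Rightarrow> 'n \<Rightarrow> bool"
  assumes "oriented D"
    and "connected_graph (underlying D)"
  shows "(real (skew_rank D) + real (independence_number (underlying D))
           \<ge> 4 * real CARD('n) - 2 * real (num_edges (underlying D))
             - sqrt (real CARD('n) * (real CARD('n) - 1) - 2 * real (num_edges (underlying D)) + 1/4)
             - 5/2)
         \<and> (real (skew_rank D) + real (independence_number (underlying D))
           = 4 * real CARD('n) - 2 * real (num_edges (underlying D))
             - sqrt (real CARD('n) * (real CARD('n) - 1) - 2 * real (num_edges (underlying D)) + 1/4)
             - 5/2
         \<longleftrightarrow> graph_iso (underlying D) {0..<CARD('n)} star_graph
             \<or> graph_iso (underlying D) {0..<3::nat} triangle_graph)"
proof -
  let ?E = "underlying D"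
  note graph = symp_underlying[of D] irreflp_underlying[OF assms(1)]
  note bound = sqrt_lower_bound[OF four_card_le_skew_rank_independence_number_num_edges[OF assms]
      num_edges_independence_number_le[OF graph] one_le_independence_number[OF graph(2)]]
  have "skew_rank D + 2 * independence_number ?E + 2 * num_edges ?E + 2 = 4 * CARD('n)
      \<and> 2 * num_edges ?E + independence_number ?E * (independence_number ?E - 1) = CARD('n) * (CARD('n) - 1)
    \<longleftrightarrow> graph_iso ?E {0..<CARD('n)} star_graph \<or> graph_iso ?E {0..<3::nat} triangle_graph"
    unfolding graph_iso_star_graph_iff graph_iso_triangle_graph_iff
    using tight_imp_star_or_triangle[OF assms] star_imp_tight[OF assms] triangle_imp_tight[OF assms]
    by blast
  then show ?thesis
    using bound by simp
qed

end
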